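(* Let $n\ge 3$. A permutation $\pi=(\pi_1,\ldots,\pi_n)$ of $\{1,\ldots,n\}$ is convex, i.e. satisfies $\pi_2-\pi_1\le\pi_3-\pi_2\le\cdots\le\pi_n-\pi_{n-1}$, if and only if $\pi$ is one of the following permutations or the reverse $(\pi_n,\ldots,\pi_1)$ of one of them: (i) $(1,2,\ldots,n)$; (ii) $(n,1,2,\ldots,n-1)$; (iii) $(n-1,1,2,\ldots,n-2,n)$; (iv) $\Pi^*_n$.
   Context: $\Pi^*_n$ is the permutation whose matrix is obtained by rotating the permutation matrix of $\pi_{(n)}$ counter-clockwise by $90$ degrees, where $\pi_{(n)}=(p,p+1,p-1,p+2,\ldots,1,2p)$ if $n=2p$ and $\pi_{(n)}=(p+1,p+2,p,p+3,\ldots,2p+1,1)$ if $n=2p+1$ (permutation matrices have $1$ in positions $(i,\pi_i)$). Explicitly, $\Pi^*_n$ lists the even numbers of $\{1,\ldots,n\}$ in decreasing order followed by the odd numbers in increasing order: $\Pi^*_n=(n,n-2,\ldots,2,1,3,\ldots,n-1)$ for $n$ even and $\Pi^*_n=(n-1,n-3,\ldots,2,1,3,\ldots,n)$ for $n$ odd. *)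

theory Defs
  imports "HOL-Combinatorics.Multiset_Permutations"
begin

text \<open>A permutation of {1..n} is a list (pi_1,...,pi_n) in permutations_of_set {1..n}.
  List index i corresponds to pi_(i+1).\<close>

definition convex_perm :: "nat list \<Rightarrow> bool" where
  "convex_perm xs \<longleftrightarrow>
     (\<forall>i. i + 2 < length xs \<longrightarrow>
        int (xs ! (i+1)) - int (xs ! i) \<le> int (xs ! (i+2)) - int (xs ! (i+1)))"

definition Pi_star :: "nat \<Rightarrow> nat list" where
  "Pi_star n = rev (filter even [1..<n+1]) @ filter odd [1..<n+1]"

definition perm_i :: "nat \<Rightarrow> nat list" where
  "perm_i n = [1..<n+1]"

definition perm_ii :: "nat \<Rightarrow> nat list" where
  "perm_ii n = n # [1..<n]"

definition perm_iii :: "nat \<Rightarrow> nat list" where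
  "perm_iii n = (n - 1) # [1..<n-1] @ [n]"

end

theory Submission
  imports Defs
begin

text \<open>A convex sequence has no strict interior local maximum, so n stands at an end of a
  convex permutation. Up to reversal the permutation is n # q with q a convex permutation of
  {1..n-1}, hence by induction one of the listed permutations of {1..n-1} or a reversal of
  one. It remains to check the first three entries of n # q: the candidates beginning with
  n, n-1, k where k \<le> n-3, or with n, n-2, 1 where n \<ge> 6, violate convexity, and the
  others are again listed.\<close>

lemma all_nat_Suc_conv: "(\<forall>i. P i) \<longleftrightarrow> P 0 \<and> (\<forall>i. P (Suc i))" for P :: "nat \<Rightarrow> bool"
  by (metis not0_implies_Suc)

lemma convex_perm_Cons:
  "convex_perm (x # xs) \<longleftrightarrow> convex_perm xs \<and>
     (2 \<le> length xs \<longrightarrow> int (xs ! 0) - int x \<le> int (xs ! 1) - int (xs ! 0))"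
  unfolding convex_perm_def by (subst all_nat_Suc_conv) (auto simp: numeral_2_eq_2)

lemma convex_perm_revI:
  assumes "convex_perm xs"
  shows "convex_perm (rev xs)"
  unfolding convex_perm_def
proof (intro allI impI)
  fix i
  assume i: "i + 2 < length (rev xs)"
  define j where "j = length xs - 3 - i"
  have "rev xs ! i = xs ! (j + 2)" "rev xs ! (i + 1) = xs ! (j + 1)" "rev xs ! (i + 2) = xs ! j"
    using i by (auto simp: rev_nth j_def intro!: arg_cong[where f = "(!) xs"])
  moreover have "j + 2 < length xs"
    using i by (simp add: j_def)
  ultimately show "int (rev xs ! (i + 1)) - int (rev xs ! i) \<le>
      int (rev xs ! (i + 2)) - int (rev xs ! (i + 1))"
    using assms unfolding convex_perm_def by auto
qed

lemma convex_perm_rev [simp]: "convex_perm (rev xs) \<longleftrightarrow> convex_perm xs"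
  using convex_perm_revI[of xs] convex_perm_revI[of "rev xs"] by auto

lemma convex_permI:
  assumes "length xs = n" "\<And>i. i < n \<Longrightarrow> int (xs ! i) = f i"
    and "\<And>i. i + 2 < n \<Longrightarrow> f (i + 1) - f i \<le> f (i + 2) - f (i + 1)"
  shows "convex_perm xs"
  using assms unfolding convex_perm_def by auto

lemma convex_perm_no_interior_max:
  assumes "convex_perm xs" "i + 2 < length xs"
  shows "\<not> (xs ! i < xs ! (i + 1) \<and> xs ! (i + 2) < xs ! (i + 1))"
  using assms unfolding convex_perm_def by fastforce

lemma not_convex_perm_Cons_max:
  assumes "2 \<le> length xs" "xs ! 0 = n" "xs ! 1 + 1 < n"
  shows "\<not> convex_perm (Suc n # xs)"
  using assms by (auto simp: convex_perm_Cons)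

lemma convex_perm_max_at_end:
  assumes p: "p \<in> permutations_of_set {1..n}" and "convex_perm p" "1 \<le> n"
  shows "hd p = n \<or> last p = n"
proof (rule ccontr)
  assume not_end: "\<not> (hd p = n \<or> last p = n)"
  have set_p: "set p = {1..n}" and dist_p: "distinct p" and len_p: "length p = n"
    using p by (auto simp: permutations_of_set_def length_finite_permutations_of_set)
  have "n \<in> set p"
    using set_p \<open>1 \<le> n\<close> by simp
  then obtain k where k: "k < n" "p ! k = n"
    using len_p by (auto simp: in_set_conv_nth)
  have "p \<noteq> []"
    using len_p \<open>1 \<le> n\<close> by auto
  then have "hd p = p ! 0" "last p = p ! (n - 1)"
    using len_p by (simp_all add: hd_conv_nth last_conv_nth)
  then have "k \<noteq> 0" "k \<noteq> n - 1"
    using not_end k by metis+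
  then have "0 < k" "k + 1 < n"
    using k by auto
  have below_max: "p ! j < n" if "j < n" "j \<noteq> k" for j
  proof -
    have "p ! j \<in> {1..n}"
      using that len_p set_p by (metis nth_mem)
    moreover have "p ! j \<noteq> p ! k"
      using that k(1) dist_p len_p by (simp add: nth_eq_iff_index_eq)
    ultimately show ?thesis
      using k by auto
  qed
  have "k - 1 + 1 = k" "k - 1 + 2 = k + 1"
    using \<open>0 < k\<close> by auto
  then show False
    using convex_perm_no_interior_max[OF \<open>convex_perm p\<close>, of "k - 1"]
      below_max[of "k - 1"] below_max[of "k + 1"] \<open>0 < k\<close> \<open>k + 1 < n\<close> k len_p
    by auto
qed

lemma Cons_in_permutations_of_set_iff:
  "x # xs \<in> permutations_of_set A \<longleftrightarrow> x \<in> A \<and> xs \<in> permutations_of_set (A - {x})"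
  by (auto simp: permutations_of_set_def)

lemma convex_perm_max_Cons:
  assumes p: "p \<in> permutations_of_set {1..Suc n}" and "convex_perm p"
  obtains q where "q \<in> permutations_of_set {1..n}" "convex_perm (Suc n # q)"
    "p = Suc n # q \<or> rev p = Suc n # q"
proof -
  have max_first: "r = Suc n # tl r \<and> tl r \<in> permutations_of_set {1..n}"
    if r: "r \<in> permutations_of_set {1..Suc n}" "hd r = Suc n" for r
  proof -
    have "r \<noteq> []"
      using r(1) by (auto simp: permutations_of_set_def)
    then have "r = Suc n # tl r"
      using r(2) by (metis list.collapse)
    moreover have "{1..Suc n} - {Suc n} = {1..n}"
      by auto
    ultimately show ?thesis
      using r(1) Cons_in_permutations_of_set_iff[of "Suc n" "tl r"] by metis
  qed
  have rev_p: "rev p \<in> permutations_of_set {1..Suc n}"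
    using p by (simp add: permutations_of_set_def)
  from convex_perm_max_at_end[OF p \<open>convex_perm p\<close>]
  consider "hd p = Suc n" | "hd (rev p) = Suc n"
    by (auto simp: hd_rev)
  then show thesis
  proof cases
    case 1
    then show thesis
      using that max_first[OF p] \<open>convex_perm p\<close> by metis
  next
    case 2
    then show thesis
      using that max_first[OF rev_p] \<open>convex_perm p\<close> convex_perm_rev by metis
  qed
qed

lemma Pi_star_Suc_even: "even n \<Longrightarrow> Pi_star (Suc n) = Pi_star n @ [Suc n]"
  by (simp add: Pi_star_def)

lemma Pi_star_Suc_odd: "odd n \<Longrightarrow> Pi_star (Suc n) = Suc n # Pi_star n"
  by (simp add: Pi_star_def)

lemma length_Pi_star [simp]: "length (Pi_star n) = n"
  by (induction n) (auto simp: Pi_star_def)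

lemma nth_Pi_star:
  "i < n \<Longrightarrow> Pi_star n ! i = (if i < n div 2 then 2 * (n div 2 - i) else 2 * (i - n div 2) + 1)"
proof (induction n arbitrary: i)
  case 0
  then show ?case by simp
next
  case (Suc n)
  show ?case
  proof (cases "even n")
    case True
    then show ?thesis
      using Suc by (auto simp: Pi_star_Suc_even nth_append elim!: evenE)
  next
    case False
    then show ?thesis
      using Suc by (auto simp: Pi_star_Suc_odd nth_Cons split: nat.splits elim!: oddE)
  qed
qed

lemma length_perm_i [simp]: "length (perm_i n) = n"
  by (simp add: perm_i_def)

lemma nth_perm_i: "i < n \<Longrightarrow> perm_i n ! i = Suc i"
  by (simp add: perm_i_def del: upt_Suc)

lemma length_perm_ii [simp]: "1 \<le> n \<Longrightarrow> length (perm_ii n) = n"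
  by (simp add: perm_ii_def)

lemma nth_perm_ii: "i < n \<Longrightarrow> perm_ii n ! i = (if i = 0 then n else i)"
  by (simp add: perm_ii_def nth_Cons split: nat.splits)

lemma length_perm_iii [simp]: "2 \<le> n \<Longrightarrow> length (perm_iii n) = n"
  by (simp add: perm_iii_def)

lemma nth_perm_iii:
  "2 \<le> n \<Longrightarrow> i < n \<Longrightarrow> perm_iii n ! i = (if i = 0 then n - 1 else if i < n - 1 then i else n)"
  by (auto simp: perm_iii_def nth_Cons nth_append split: nat.splits)

lemma convex_perm_i: "convex_perm (perm_i n)"
  by (rule convex_permI[where f = "\<lambda>i. int i + 1"]) (auto simp: nth_perm_i)

lemma convex_perm_ii: "1 \<le> n \<Longrightarrow> convex_perm (perm_ii n)"
  by (rule convex_permI[where f = "\<lambda>i. if i = 0 then int n else int i"]) (auto simp: nth_perm_ii)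

lemma convex_perm_iii: "2 \<le> n \<Longrightarrow> convex_perm (perm_iii n)"
  by (rule convex_permI[where
        f = "\<lambda>i. if i = 0 then int n - 1 else if i < n - 1 then int i else int n"])
    (auto simp: nth_perm_iii)

lemma convex_Pi_star: "convex_perm (Pi_star n)"
  by (rule convex_permI[where
        f = "\<lambda>i. if i < n div 2 then 2 * (int (n div 2) - int i) else 2 * (int i - int (n div 2)) + 1"])
    (auto simp: nth_Pi_star)

definition perm_family :: "nat \<Rightarrow> nat list set" where
  "perm_family n = {perm_i n, perm_ii n, perm_iii n, Pi_star n}"

lemma convex_perm_of_perm_family: "2 \<le> n \<Longrightarrow> q \<in> perm_family n \<Longrightarrow> convex_perm q"
  by (auto simp: perm_family_def convex_perm_i convex_perm_ii convex_perm_iii convex_Pi_star)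

lemma Cons_perm_i: "Suc n # perm_i n = perm_ii (Suc n)"
  by (simp add: perm_i_def perm_ii_def)

lemma Cons_rev_perm_i: "Suc n # rev (perm_i n) = rev (perm_i (Suc n))"
  by (simp add: perm_i_def)

lemma Cons_rev_perm_ii: "Suc n # rev (perm_ii n) = rev (perm_iii (Suc n))"
  by (simp add: perm_ii_def perm_iii_def)

lemma Cons_perm_iii_3: "4 # perm_iii 3 = Pi_star 4"
  by (simp add: perm_iii_def Pi_star_def upt_rec)

lemma Cons_perm_iii_4: "5 # perm_iii 4 = rev (Pi_star 5)"
  by (simp add: perm_iii_def Pi_star_def upt_rec)

lemma Cons_max_perm_family:
  assumes n: "3 \<le> n" and q: "q \<in> perm_family n" and convex: "convex_perm (Suc n # q)"
  shows "Suc n # q \<in> perm_family (Suc n) \<or> rev (Suc n # q) \<in> perm_family (Suc n)"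
proof -
  from q consider "q = perm_i n" | "q = perm_ii n" | "q = perm_iii n" | "q = Pi_star n"
    unfolding perm_family_def by blast
  then show ?thesis
  proof cases
    case 1
    then show ?thesis
      by (simp add: perm_family_def Cons_perm_i)
  next
    case 2
    then show ?thesis
      using not_convex_perm_Cons_max[of q n] convex n by (simp add: nth_perm_ii)
  next
    case 3
    have "q ! 0 = n - 1" "q ! 1 = 1"
      using 3 n by (simp_all add: nth_perm_iii)
    then have "n \<le> 4"
      using convex n 3 by (simp add: convex_perm_Cons)
    then consider "n = 3" | "n = 4"
      using n by linarith
    then show ?thesis
      using 3 by cases (simp_all add: perm_family_def Cons_perm_iii_3 Cons_perm_iii_4)
  next
    case 4
    show ?thesis
    proof (cases "even n")
      case True
      then have "q ! 0 = n" "q ! 1 = n - 2"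
        using 4 n by (auto simp: nth_Pi_star elim!: evenE)
      then show ?thesis
        using not_convex_perm_Cons_max[of q n] convex n 4 by simp
    next
      case False
      then show ?thesis
        using 4 by (simp add: perm_family_def Pi_star_Suc_odd)
    qed
  qed
qed

lemma Cons_max_rev_perm_family:
  assumes n: "3 \<le> n" and q: "rev q \<in> perm_family n" and convex: "convex_perm (Suc n # q)"
  shows "Suc n # q \<in> perm_family (Suc n) \<or> rev (Suc n # q) \<in> perm_family (Suc n)"
proof -
  from q consider "q = rev (perm_i n)" | "q = rev (perm_ii n)" | "q = rev (perm_iii n)"
    | "q = rev (Pi_star n)"
    unfolding perm_family_def by (metis insertE rev_rev_ident singletonD)
  then show ?thesis
  proof cases
    case 1
    then show ?thesis
      by (simp add: perm_family_def Cons_rev_perm_i)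
  next
    case 2
    then show ?thesis
      by (simp add: perm_family_def Cons_rev_perm_ii)
  next
    case 3
    have "q ! 0 = n" "q ! 1 = n - 2"
      using 3 n by (auto simp: rev_nth nth_perm_iii)
    then show ?thesis
      using not_convex_perm_Cons_max[of q n] convex n 3 by simp
  next
    case 4
    show ?thesis
    proof (cases "even n")
      case True
      then show ?thesis
        using 4 by (simp add: perm_family_def Pi_star_Suc_even)
    next
      case False
      then have "q ! 0 = n" "q ! 1 = n - 2"
        using 4 n by (auto simp: rev_nth nth_Pi_star elim!: oddE)
      then show ?thesis
        using not_convex_perm_Cons_max[of q n] convex n 4 by simp
    qed
  qed
qed

lemma convex_perm_in_perm_family:
  assumes "2 \<le> n" "p \<in> permutations_of_set {1..Suc n}" "convex_perm p"
  shows "p \<in> perm_family (Suc n) \<or> rev p \<in> perm_family (Suc n)"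
  using assms
proof (induction n arbitrary: p rule: nat_induct_at_least)
  case base
  obtain q where q: "q \<in> permutations_of_set {1..2}" "p = Suc 2 # q \<or> rev p = Suc 2 # q"
    using convex_perm_max_Cons[OF base] by metis
  have "{1..2::nat} = {1, 2}"
    by auto
  then have "q = [1, 2] \<or> q = [2, 1]"
    using q(1) by (simp add: permutations_of_set_doubleton)
  then have "Suc 2 # q \<in> perm_family (Suc 2) \<or> rev (Suc 2 # q) \<in> perm_family (Suc 2)"
    by (auto simp: perm_family_def perm_i_def perm_ii_def upt_rec)
  then show ?case
    using q(2) by auto
next
  case (Suc n)
  obtain q where q: "q \<in> permutations_of_set {1..Suc n}" "convex_perm (Suc (Suc n) # q)"
      "p = Suc (Suc n) # q \<or> rev p = Suc (Suc n) # q"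
    using convex_perm_max_Cons[OF Suc.prems] by metis
  then have "q \<in> perm_family (Suc n) \<or> rev q \<in> perm_family (Suc n)"
    using Suc.IH by (simp add: convex_perm_Cons)
  moreover have "3 \<le> Suc n"
    using Suc.hyps by simp
  ultimately have "Suc (Suc n) # q \<in> perm_family (Suc (Suc n)) \<or>
      rev (Suc (Suc n) # q) \<in> perm_family (Suc (Suc n))"
    using Cons_max_perm_family Cons_max_rev_perm_family q(2) by blast
  then show ?case
    using q(3) by auto
qed

theorem theorem4p4:
  fixes n :: nat and p :: "nat list"
  assumes "n \<ge> 3"
    and "p \<in> permutations_of_set {1..n}"
  shows "convex_perm p \<longleftrightarrow>
    (\<exists>q \<in> {perm_i n, perm_ii n, perm_iii n, Pi_star n}. p = q \<or> p = rev q)"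
proof -
  obtain m where m: "n = Suc m" "2 \<le> m"
    using assms(1) by (cases n) auto
  have "convex_perm p \<longleftrightarrow> p \<in> perm_family n \<or> rev p \<in> perm_family n"
    using convex_perm_in_perm_family[of m p] convex_perm_of_perm_family[of n p]
      convex_perm_of_perm_family[of n "rev p"] assms m by auto
  then show ?thesis
    unfolding perm_family_def by (auto simp: rev_swap)
qed

end
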